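(* Let $Q$ be a Jordan loop and $x\in Q$ such that $x^3x^3=x^6$. Then (i) $x^6$ is well-defined; (ii) $x^7$ is well-defined; (iii) $x^6x^{-1}=x^5$; (iv) $x^8$ is well-defined.
   Context: A loop is a set $Q$ with a binary operation (juxtaposition) and neutral element $e$ such that for all $a,b$ the equations $ax=b$, $ya=b$ have unique solutions. A Jordan loop is a commutative loop satisfying $x^2(yx)=(x^2y)x$. For $k\ge 0$, $x^k$ denotes the right-associated product $x(x(\cdots(xe)\cdots))$ with $k$ factors $x$. We say $x^k$ is well-defined if every bracketing of a product of $k$ copies of $x$ gives the same value. $x^{-1}$ denotes the (two-sided) inverse of $x$. *)

theory Defs
  imports Main
begin

definition loop :: "('a \<Rightarrow> 'a \<Rightarrow> 'a) \<Rightarrow> 'a \<Rightarrow> bool" where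
  "loop mult e \<longleftrightarrow>
     (\<forall>a. mult e a = a \<and> mult a e = a) \<and>
     (\<forall>a b. \<exists>!x. mult a x = b) \<and>
     (\<forall>a b. \<exists>!y. mult y a = b)"

definition jordan_loop :: "('a \<Rightarrow> 'a \<Rightarrow> 'a) \<Rightarrow> 'a \<Rightarrow> bool" where
  "jordan_loop mult e \<longleftrightarrow> loop mult e \<and>
     (\<forall>a b. mult a b = mult b a) \<and>
     (\<forall>x y. mult (mult x x) (mult y x) = mult (mult (mult x x) y) x)"

fun rpow :: "('a \<Rightarrow> 'a \<Rightarrow> 'a) \<Rightarrow> 'a \<Rightarrow> 'a \<Rightarrow> nat \<Rightarrow> 'a" where
  "rpow mult e x 0 = e"
| "rpow mult e x (Suc k) = mult x (rpow mult e x k)"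

text \<open>bracketing mult x k v: v is the value of some bracketing of a product of k copies of x.\<close>
inductive bracketing :: "('a \<Rightarrow> 'a \<Rightarrow> 'a) \<Rightarrow> 'a \<Rightarrow> nat \<Rightarrow> 'a \<Rightarrow> bool"
  for mult :: "'a \<Rightarrow> 'a \<Rightarrow> 'a" and x :: 'a where
  single: "bracketing mult x 1 x"
| prod: "bracketing mult x i a \<Longrightarrow> bracketing mult x j b \<Longrightarrow> bracketing mult x (i + j) (mult a b)"

definition well_defined_pow :: "('a \<Rightarrow> 'a \<Rightarrow> 'a) \<Rightarrow> 'a \<Rightarrow> 'a \<Rightarrow> nat \<Rightarrow> bool" where
  "well_defined_pow mult e x k \<longleftrightarrow>
     (\<forall>v w. bracketing mult x k v \<longrightarrow> bracketing mult x k w \<longrightarrow> v = w)"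

definition loop_inv :: "('a \<Rightarrow> 'a \<Rightarrow> 'a) \<Rightarrow> 'a \<Rightarrow> 'a \<Rightarrow> 'a" where
  "loop_inv mult e x = (THE y. mult x y = e \<and> mult y x = e)"

end

theory Submission
  imports Defs
begin

text \<open>
  If \<open>x u = e\<close>, the
  Jordan identity with \<open>x\<close> or \<open>u\<close> in the squared slot gives \<open>x^2 u = x\<close>,
  \<open>u^2 x^3 = x\<close>, \<open>x^4 u = x^3\<close>, \<open>x^3 u = x^2\<close> and \<open>x^2 x^k = x^(k+2)\<close>.
  Given \<open>x^3 x^3 = x^6\<close>, two further instances of the Jordan identity at \<open>x^3\<close> yield
  \<open>x^6 u = x^5\<close> and \<open>x^3 x^5 = x^8\<close>. Hence \<open>x^i x^j = x^(i+j)\<close> whenever \<open>i + j \<le> 8\<close>,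
  so every bracketing of at most eight factors evaluates to the right-associated power.
\<close>

locale jordan_cancel_magma =
  fixes mult :: "'a \<Rightarrow> 'a \<Rightarrow> 'a" (infixl "\<cdot>" 70) and e :: 'a
  assumes commute: "a \<cdot> b = b \<cdot> a"
    and left_unit: "e \<cdot> a = a"
    and left_cancel: "a \<cdot> b = a \<cdot> c \<Longrightarrow> b = c"
    and jordan: "(a \<cdot> a) \<cdot> (b \<cdot> a) = ((a \<cdot> a) \<cdot> b) \<cdot> a"
begin

abbreviation pow :: "'a \<Rightarrow> nat \<Rightarrow> 'a" (infixr "\<up>" 80)
  where "a \<up> k \<equiv> rpow (\<cdot>) e a k"

lemma right_unit: "a \<cdot> e = a"
  using commute left_unit by metis

lemma jordan_commute: "(a \<cdot> a) \<cdot> (b \<cdot> a) = a \<cdot> ((a \<cdot> a) \<cdot> b)"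
  using jordan commute by metis

lemma inverse_unique: "a \<cdot> b = e \<Longrightarrow> loop_inv (\<cdot>) e a = b"
  unfolding loop_inv_def by (rule the_equality) (use commute left_cancel in metis)+

lemma square_mult_inverse:
  assumes "a \<cdot> b = e" shows "(a \<cdot> a) \<cdot> b = a"
proof -
  have "a \<cdot> a = a \<cdot> ((a \<cdot> a) \<cdot> b)"
    using jordan_commute[of a b] assms commute right_unit by metis
  then show ?thesis using left_cancel by metis
qed

lemma inverse_square_mult_square:
  assumes "a \<cdot> b = e" shows "(b \<cdot> b) \<cdot> (a \<cdot> a) = e"
proof -
  have "b \<cdot> e = b \<cdot> ((b \<cdot> b) \<cdot> (a \<cdot> a))"
    using jordan_commute[of b "a \<cdot> a"] square_mult_inverse[OF assms]
      square_mult_inverse[of b a] assms commute right_unit by metis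
  then show ?thesis using left_cancel by metis
qed

lemma fourth_mult_inverse:
  assumes "a \<cdot> b = e" shows "((a \<cdot> a) \<cdot> (a \<cdot> a)) \<cdot> b = a \<cdot> (a \<cdot> a)"
proof -
  have "b \<cdot> (a \<cdot> a) = a" using square_mult_inverse[OF assms] commute by metis
  then have "(a \<cdot> a) \<cdot> (a \<cdot> (a \<cdot> a)) = (a \<cdot> a) \<cdot> (((a \<cdot> a) \<cdot> (a \<cdot> a)) \<cdot> b)"
    using jordan_commute[of "a \<cdot> a" b] jordan_commute[of a "a \<cdot> a"] commute by metis
  then show ?thesis using left_cancel by metis
qed

lemma inverse_square_mult_cube:
  assumes "a \<cdot> b = e" shows "(b \<cdot> b) \<cdot> (a \<cdot> (a \<cdot> a)) = a"
proof -
  have "((a \<cdot> a) \<cdot> (a \<cdot> a)) \<cdot> (b \<cdot> b) = a \<cdot> a"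
    using square_mult_inverse inverse_square_mult_square[OF assms] commute by metis
  moreover have "b \<cdot> (a \<cdot> a) = a" using square_mult_inverse[OF assms] commute by metis
  ultimately show ?thesis
    using jordan_commute[of b "(a \<cdot> a) \<cdot> (a \<cdot> a)"] fourth_mult_inverse[OF assms] commute
    by metis
qed

lemma cube_mult_inverse:
  assumes "a \<cdot> b = e" shows "(a \<cdot> (a \<cdot> a)) \<cdot> b = a \<cdot> a"
proof -
  have "(b \<cdot> b) \<cdot> ((a \<cdot> (a \<cdot> a)) \<cdot> b) = (b \<cdot> b) \<cdot> (a \<cdot> a)"
    using jordan_commute[of b "a \<cdot> (a \<cdot> a)"] inverse_square_mult_cube[OF assms]
      inverse_square_mult_square[OF assms] assms commute by metis
  then show ?thesis using left_cancel by metis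
qed

lemma rpow_1: "a \<up> 1 = a"
  by (simp add: right_unit)

lemma rpow_2: "a \<up> 2 = a \<cdot> a"
  by (simp add: right_unit numeral_2_eq_2)

lemma rpow_3: "a \<up> 3 = a \<cdot> (a \<cdot> a)"
  by (simp add: right_unit numeral_3_eq_3)

lemma rpow_2_mult_rpow: "a \<up> 2 \<cdot> a \<up> k = a \<up> (k + 2)"
proof (induction k)
  case 0
  show ?case by (simp add: right_unit rpow_2)
next
  case (Suc k)
  have "(a \<cdot> a) \<cdot> (a \<up> k \<cdot> a) = a \<cdot> ((a \<cdot> a) \<cdot> a \<up> k)" by (rule jordan_commute)
  then show ?case using Suc commute by (simp add: rpow_2)
qed

lemma rpow_4_eq: "a \<up> 4 = a \<up> 2 \<cdot> a \<up> 2"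
  using rpow_2_mult_rpow[of a 2] by simp

lemma rpow_3_mult_rpow_4: "a \<up> 3 \<cdot> a \<up> 4 = a \<up> 7"
proof -
  have "a \<up> 4 \<cdot> a \<up> 3 = a \<up> 2 \<cdot> (a \<up> 4 \<cdot> a)"
    using jordan_commute[of "a \<up> 2" a] rpow_4_eq rpow_3 rpow_2 by metis
  also have "\<dots> = a \<up> 7"
    using rpow_2_mult_rpow[of a 5] commute by (simp add: numeral_eq_Suc)
  finally show ?thesis using commute by metis
qed

lemma rpow_4_mult_rpow_4: "a \<up> 4 \<cdot> a \<up> 4 = a \<up> 8"
  using jordan_commute[of "a \<up> 2" "a \<up> 2"] rpow_4_eq
    rpow_2_mult_rpow[of a 4] rpow_2_mult_rpow[of a 6]
  by (simp add: commute)

text \<open>The key step is \<open>u^4 x^6 = x^2\<close>: \<open>inverse_square_mult_cube\<close> applied to the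
  mutually inverse elements \<open>x^2\<close> and \<open>u^2\<close>.\<close>

lemma rpow_6_mult_inverse:
  assumes inv: "x \<cdot> u = e" and cube: "x \<up> 3 \<cdot> x \<up> 3 = x \<up> 6"
  shows "x \<up> 6 \<cdot> u = x \<up> 5"
proof -
  have sq_inv: "x \<up> 2 \<cdot> u \<up> 2 = e"
    using inverse_square_mult_square[OF inv] rpow_2 commute by metis
  have "x \<up> 6 = x \<up> 2 \<cdot> (x \<up> 2 \<cdot> x \<up> 2)"
    using rpow_2_mult_rpow[of x 4] rpow_4_eq by simp
  then have u4_x6: "u \<up> 4 \<cdot> x \<up> 6 = x \<up> 2"
    using inverse_square_mult_cube[OF sq_inv] rpow_4_eq by metis
  have u4_x: "u \<up> 4 \<cdot> x = u \<up> 3"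
    using fourth_mult_inverse[of u x] inv commute rpow_4_eq rpow_2 rpow_3 by metis
  have "x \<up> 3 \<cdot> u \<up> 2 = x"
    using inverse_square_mult_cube[OF inv] rpow_2 rpow_3 commute by metis
  then have "u \<up> 2 \<cdot> u = u \<up> 2 \<cdot> (u \<up> 4 \<cdot> x \<up> 3)"
    using jordan_commute[of "u \<up> 2" "x \<up> 3"] u4_x rpow_4_eq rpow_2 rpow_3 commute by metis
  then have u4_x3: "u \<up> 4 \<cdot> x \<up> 3 = u"
    using left_cancel by metis
  have "x \<up> 3 \<cdot> x \<up> 2 = x \<up> 5"
    using rpow_2_mult_rpow[of x 3] commute by simp
  then show ?thesis
    using jordan_commute[of "x \<up> 3" "u \<up> 4"] cube u4_x3 u4_x6 commute by metis
qed

lemma rpow_3_mult_rpow_5: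
  assumes inv: "x \<cdot> u = e" and cube: "x \<up> 3 \<cdot> x \<up> 3 = x \<up> 6"
  shows "x \<up> 3 \<cdot> x \<up> 5 = x \<up> 8"
proof -
  have "u \<cdot> x \<up> 3 = x \<up> 2"
    using cube_mult_inverse[OF inv] rpow_2 rpow_3 commute by metis
  moreover have "x \<up> 6 \<cdot> x \<up> 2 = x \<up> 8"
    using rpow_2_mult_rpow[of x 6] commute by simp
  ultimately show ?thesis
    using jordan_commute[of "x \<up> 3" u] cube rpow_6_mult_inverse[OF inv cube] by metis
qed

lemma rpow_mult_rpow_upto_8:
  assumes inv: "x \<cdot> u = e" and cube: "x \<up> 3 \<cdot> x \<up> 3 = x \<up> 6"
    and "1 \<le> i" "1 \<le> j" "i + j \<le> 8"
  shows "x \<up> i \<cdot> x \<up> j = x \<up> (i + j)"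
proof -
  have ordered: "x \<up> i \<cdot> x \<up> j = x \<up> (i + j)" if "1 \<le> i" "i \<le> j" "i + j \<le> 8" for i j
  proof -
    from that consider "i = 1" | "i = 2" | "i = 3" "j = 3" | "i = 3" "j = 4" | "i = 3" "j = 5"
      | "i = 4" "j = 4"
      by linarith
    then show ?thesis
      using rpow_1 rpow_2_mult_rpow[of x j] cube rpow_3_mult_rpow_4
        rpow_3_mult_rpow_5[OF inv cube] rpow_4_mult_rpow_4
      by cases (simp_all add: add.commute)
  qed
  show ?thesis
    using ordered[of i j] ordered[of j i] assms(3-5) commute
    by (cases "i \<le> j") (simp_all add: add.commute)
qed

lemma bracketing_pos: "bracketing (\<cdot>) a n w \<Longrightarrow> 1 \<le> n"
  by (induction rule: bracketing.induct) auto

lemma well_defined_pow_if_rpow_mult_rpow: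
  assumes "\<And>i j. 1 \<le> i \<Longrightarrow> 1 \<le> j \<Longrightarrow> i + j \<le> n \<Longrightarrow> a \<up> i \<cdot> a \<up> j = a \<up> (i + j)"
    and "m \<le> n"
  shows "well_defined_pow (\<cdot>) e a m"
proof -
  have "w = a \<up> k" if "bracketing (\<cdot>) a k w" "k \<le> n" for k w
    using that
  proof (induction rule: bracketing.induct)
    case single
    then show ?case by (simp add: right_unit)
  next
    case (prod i b j c)
    then show ?case using assms(1) bracketing_pos by simp
  qed
  then show ?thesis unfolding well_defined_pow_def using assms(2) by blast
qed

end

lemma jordan_loop_imp_jordan_cancel_magma:
  assumes "jordan_loop mult e"
  shows "jordan_cancel_magma mult e"
proof
  have loop: "loop mult e" using assms unfolding jordan_loop_def by simp
  show "mult a b = mult b a" for a b using assms unfolding jordan_loop_def by simp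
  show "mult e a = a" for a using loop unfolding loop_def by simp
  show "b = c" if "mult a b = mult a c" for a b c
    using loop that unfolding loop_def by metis
  show "mult (mult a a) (mult b a) = mult (mult (mult a a) b) a" for a b
    using assms unfolding jordan_loop_def by blast
qed

lemma jordan_loop_right_inverse: "jordan_loop mult e \<Longrightarrow> \<exists>u. mult x u = e"
  unfolding jordan_loop_def loop_def by metis

theorem theorem2p8:
  fixes mult :: "'a \<Rightarrow> 'a \<Rightarrow> 'a" and e x :: 'a
  assumes "jordan_loop mult e"
    and "mult (rpow mult e x 3) (rpow mult e x 3) = rpow mult e x 6"
  shows "well_defined_pow mult e x 6 \<and>
         well_defined_pow mult e x 7 \<and>
         mult (rpow mult e x 6) (loop_inv mult e x) = rpow mult e x 5 \<and>
         well_defined_pow mult e x 8"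
proof -
  interpret jordan_cancel_magma mult e
    using jordan_loop_imp_jordan_cancel_magma[OF assms(1)] .
  obtain u where inv: "mult x u = e"
    using jordan_loop_right_inverse[OF assms(1)] by blast
  have "well_defined_pow mult e x m" if "m \<le> 8" for m
    using well_defined_pow_if_rpow_mult_rpow rpow_mult_rpow_upto_8[OF inv assms(2)] that
    by blast
  moreover have "mult (rpow mult e x 6) (loop_inv mult e x) = rpow mult e x 5"
    using rpow_6_mult_inverse[OF inv assms(2)] inverse_unique[OF inv] by simp
  ultimately show ?thesis by simp
qed

end
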